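(* There exist $\bar\tau\in(\tfrac12,1)$ and $\bar\rho,\bar R,\bar\phi,\bar\epsilon>0$ such that the following holds. Let $p,q\in\mathbb{H}^n\setminus\{0\}$, $t,\tilde t\ge1$, $R>1$, $T\ge t\tilde t$, $\epsilon\in(0,1)$, and $r\ge\tilde r\ge TR$ with $\tilde r\le\epsilon r$; suppose $q\in\partial_tB_r(p)$ and $0\in\partial_tB_r(p)\cap\partial_{\tilde t}B_{\tilde r}(q)$. Let $I(p)=\{i:\rho_i(p)<10T/r\}$. If $R>\bar R$, $\epsilon<\bar\epsilon$, $|\tau_p|\ge\bar\tau$ and $\max_{1\le i\le n}\phi_i(p,q)<\bar\phi$, then either there exists $i\notin I(p)$ with $\rho_i(q)<10T/\tilde r$, or $d(\hat p,\hat q)>\bar\rho$.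
   Context: $\mathbb{H}^n=\mathbb{C}^n\times\mathbb{R}$ with product $(z,\tau)(w,\sigma)=(z+w,\tau+\sigma+\tfrac12\operatorname{Im}\langle z,w\rangle)$, $\langle z,w\rangle=\sum_j\overline{z_j}w_j$, identity $0$; dilations $\delta_\lambda(z,\tau)=(\lambda z,\lambda^2\tau)$; $d(p,q)=\inf\{r>0:\delta_{1/r}(pq^{-1})\in B_{eucl}\}$ ($B_{eucl}$ the closed Euclidean unit ball in $\mathbb{R}^{2n+1}$). $B_r(p)=\{y:d(y,p)\le r\}$, $\partial B_r(p)=\{y:d(y,p)=r\}$, $\partial_tB_r(p)=\{y:d(y,\partial B_r(p))\le t\}$. For $p\ne0$ let $\hat p=\delta_{1/d(p,0)}p=(z_p,\tau_p)$, so $\|z_p\|^2+\tau_p^2=1$; write $(z_p)_j=\rho_j(p)e^{i\phi_j(p)}$ with $\rho_j(p)\ge0$, $\phi_j(p)\in(-\pi,\pi]$. For $p,q\ne0$, $\phi_j(p,q)\in[0,\pi]$ is the magnitude of the angle between $e^{i\phi_j(p)}$ and $e^{i\phi_j(q)}$. *)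

theory Defs
  imports "HOL-Analysis.Analysis"
begin

text \<open>Heisenberg group H^n = C^n x R; the dimension n is the cardinality of the finite index type 'n.\<close>
type_synonym 'n heis = "(complex ^ 'n) \<times> real"

definition hinner :: "complex ^ 'n::finite \<Rightarrow> complex ^ 'n \<Rightarrow> complex" where
  "hinner z w = (\<Sum>j\<in>UNIV. cnj (z $ j) * w $ j)"

definition hmult :: "'n::finite heis \<Rightarrow> 'n heis \<Rightarrow> 'n heis" where
  "hmult p q = (fst p + fst q, snd p + snd q + (1/2) * Im (hinner (fst p) (fst q)))"

definition hinv :: "'n::finite heis \<Rightarrow> 'n heis" where
  "hinv p = (- fst p, - snd p)"

definition hzero :: "'n::finite heis" where
  "hzero = (0, 0)"

definition hdil :: "real \<Rightarrow> 'n::finite heis \<Rightarrow> 'n heis" where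
  "hdil l p = (l *\<^sub>R fst p, l\<^sup>2 * snd p)"

definition in_eucl_ball :: "'n::finite heis \<Rightarrow> bool" where
  "in_eucl_ball p \<longleftrightarrow> (\<Sum>j\<in>UNIV. (cmod (fst p $ j))\<^sup>2) + (snd p)\<^sup>2 \<le> 1"

definition hdist :: "'n::finite heis \<Rightarrow> 'n heis \<Rightarrow> real" where
  "hdist p q = Inf {r. r > 0 \<and> in_eucl_ball (hdil (1/r) (hmult p (hinv q)))}"

definition hsphere :: "real \<Rightarrow> 'n::finite heis \<Rightarrow> 'n heis set" where
  "hsphere r p = {y. hdist y p = r}"

definition hsetdist :: "'n::finite heis \<Rightarrow> 'n heis set \<Rightarrow> real" where
  "hsetdist y S = Inf ((\<lambda>x. hdist y x) ` S)"

definition hshell :: "real \<Rightarrow> real \<Rightarrow> 'n::finite heis \<Rightarrow> 'n heis set" where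
  "hshell t r p = {y. hsetdist y (hsphere r p) \<le> t}"

definition hhat :: "'n::finite heis \<Rightarrow> 'n heis" where
  "hhat p = hdil (1 / hdist p hzero) p"

definition hrho :: "'n::finite heis \<Rightarrow> 'n \<Rightarrow> real" where
  "hrho p j = cmod (fst (hhat p) $ j)"

definition hphi :: "'n::finite heis \<Rightarrow> 'n \<Rightarrow> real" where
  "hphi p j = Arg (fst (hhat p) $ j)"

definition htau :: "'n::finite heis \<Rightarrow> real" where
  "htau p = snd (hhat p)"

text \<open>Magnitude in [0,pi] of the angle between e^{i phi_j(p)} and e^{i phi_j(q)}.\<close>
definition hphi2 :: "'n::finite heis \<Rightarrow> 'n heis \<Rightarrow> 'n \<Rightarrow> real" where
  "hphi2 p q j = arccos (cos (hphi p j - hphi q j))"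

end

theory Submission
  imports Defs
begin

text \<open>
  Write \<open>p = (z, \<tau>)\<close> and \<open>q = (w, \<sigma>)\<close>. The gauge of \<open>(z, \<tau>)\<close> is the positive root \<open>N\<close> of
  \<open>|z|\<^sup>2 N\<^sup>2 + \<tau>\<^sup>2 = N\<^sup>4\<close>, so a point \<open>(y, h)\<close> lies on \<open>\<partial>B\<^sub>r(p)\<close> iff
  \<open>r\<^sup>4 = |z|\<^sup>2 r\<^sup>2 + \<tau>\<^sup>2 + L(y) + Q(y, h)\<close>, where \<open>L\<close> is linear in \<open>y\<close> and \<open>Q\<close> collects the
  remaining terms, the dominant one being \<open>-2\<tau>h\<close>. Pick \<open>y\<^sub>0, y\<^sub>1 \<in> \<partial>B\<^sub>r(p)\<close> within \<open>2t\<close> of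
  \<open>0\<close> and of \<open>q\<close>; then \<open>|p| \<approx> r\<close> and \<open>|q| \<approx> r'\<close>.
  If both alternatives of the conclusion failed, then \<open>\<hat>q\<close> would be as close to the vertical axis
  as \<open>\<hat>p\<close> and on the same side, so \<open>\<tau>\<sigma> \<approx> r\<^sup>2 r'\<^sup>2\<close> and \<open>Q(y\<^sub>1) \<le> -1.8 r\<^sup>2 r'\<^sup>2\<close>, while
  \<open>Q(y\<^sub>0) \<approx> 0\<close>. In each coordinate either \<open>|z\<^sub>i| = O(T)\<close> or \<open>w\<^sub>i\<close> is large and almost parallel
  to \<open>z\<^sub>i\<close>; in both cases \<open>L(y\<^sub>1) - L(y\<^sub>0) \<le> O(r\<^sup>2 T t)\<close>, which is negligible because
  \<open>r' \<ge> 1000 (n + 1) T\<close>. So \<open>y\<^sub>0\<close> and \<open>y\<^sub>1\<close> cannot both lie on \<open>\<partial>B\<^sub>r(p)\<close>.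
\<close>

section \<open>The gauge\<close>

definition hgauge :: "'n::finite heis \<Rightarrow> real" where
  "hgauge x = sqrt (((norm (fst x))\<^sup>2 + sqrt ((norm (fst x))^4 + 4 * (snd x)\<^sup>2)) / 2)"

lemma norm_vec_power2_eq_sum: "(norm (v :: complex ^ 'n::finite))\<^sup>2 = (\<Sum>j\<in>UNIV. (cmod (v $ j))\<^sup>2)"
  unfolding norm_vec_def L2_set_def by (simp add: sum_nonneg)

lemma quadratic_le_iff_root_le:
  fixes a b u :: real
  assumes "a \<ge> 0" "u > 0"
  shows "a * u + b\<^sup>2 \<le> u\<^sup>2 \<longleftrightarrow> (a + sqrt (a\<^sup>2 + 4 * b\<^sup>2)) / 2 \<le> u"
proof -
  define S where "S = sqrt (a\<^sup>2 + 4 * b\<^sup>2)"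
  have "S\<^sup>2 = a\<^sup>2 + 4 * b\<^sup>2" unfolding S_def by simp
  then have factor: "u\<^sup>2 - a * u - b\<^sup>2 = (u - (a + S) / 2) * (u - (a - S) / 2)"
    by (simp add: field_simps power2_eq_square)
  have "a \<le> S" unfolding S_def by (rule real_le_rsqrt) simp
  then have "u - (a - S) / 2 > 0" using assms by simp
  then have "a * u + b\<^sup>2 \<le> u\<^sup>2 \<longleftrightarrow> u - (a + S) / 2 \<ge> 0"
    using factor by (smt (verit) zero_le_mult_iff)
  then show ?thesis unfolding S_def by simp
qed

lemma hgauge_nonneg: "hgauge x \<ge> 0"
  unfolding hgauge_def by simp

lemma hgauge_power2: "(hgauge x)\<^sup>2 = ((norm (fst x))\<^sup>2 + sqrt ((norm (fst x))^4 + 4 * (snd x)\<^sup>2)) / 2"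
  unfolding hgauge_def by simp

lemma hgauge_le_iff:
  assumes "\<rho> > 0"
  shows "hgauge x \<le> \<rho> \<longleftrightarrow> (norm (fst x))\<^sup>2 * \<rho>\<^sup>2 + (snd x)\<^sup>2 \<le> \<rho>^4"
proof -
  have "hgauge x \<le> \<rho> \<longleftrightarrow> (hgauge x)\<^sup>2 \<le> \<rho>\<^sup>2"
    using abs_le_square_iff[of "hgauge x" \<rho>] hgauge_nonneg[of x] assms by simp
  also have "\<dots> \<longleftrightarrow> (norm (fst x))\<^sup>2 * \<rho>\<^sup>2 + (snd x)\<^sup>2 \<le> (\<rho>\<^sup>2)\<^sup>2"
    unfolding hgauge_power2 using quadratic_le_iff_root_le[of "(norm (fst x))\<^sup>2" "\<rho>\<^sup>2" "snd x"] assms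
    by (simp add: power_mult_distrib power2_eq_square[of "(norm (fst x))\<^sup>2"] mult.commute)
  finally show ?thesis by (simp add: power2_eq_square power4_eq_xxxx mult.assoc)
qed

lemma in_eucl_ball_hdil_iff:
  assumes "\<rho> > 0"
  shows "in_eucl_ball (hdil (1/\<rho>) x) \<longleftrightarrow> hgauge x \<le> \<rho>"
proof -
  have "in_eucl_ball (hdil (1/\<rho>) x) \<longleftrightarrow> (norm ((1/\<rho>) *\<^sub>R fst x))\<^sup>2 + ((1/\<rho>)\<^sup>2 * snd x)\<^sup>2 \<le> 1"
    unfolding in_eucl_ball_def hdil_def fst_conv snd_conv norm_vec_power2_eq_sum ..
  also have "\<dots> \<longleftrightarrow> (norm (fst x))\<^sup>2 / \<rho>\<^sup>2 + (snd x)\<^sup>2 / \<rho>^4 \<le> 1"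
    using assms by (simp add: power_mult_distrib power_divide)
  also have "\<dots> \<longleftrightarrow> ((norm (fst x))\<^sup>2 * \<rho>\<^sup>2 + (snd x)\<^sup>2) / \<rho>^4 \<le> 1"
    using assms by (simp add: add_divide_distrib eval_nat_numeral)
  also have "\<dots> \<longleftrightarrow> (norm (fst x))\<^sup>2 * \<rho>\<^sup>2 + (snd x)\<^sup>2 \<le> \<rho>^4"
    using assms by simp
  finally show ?thesis using hgauge_le_iff[OF assms, of x] by simp
qed

lemma hdist_eq_hgauge: "hdist p q = hgauge (hmult p (hinv q))"
proof -
  define m where "m = hgauge (hmult p (hinv q))"
  have "{r. r > 0 \<and> in_eucl_ball (hdil (1/r) (hmult p (hinv q)))} = {r. r > 0 \<and> m \<le> r}"
    using in_eucl_ball_hdil_iff unfolding m_def by blast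
  also have "\<dots> = (if m = 0 then {0<..} else {m..})"
    using hgauge_nonneg[of "hmult p (hinv q)"] unfolding m_def by auto
  finally show ?thesis unfolding hdist_def m_def[symmetric] by simp
qed

lemma hgauge_quartic: "(norm (fst x))\<^sup>2 * (hgauge x)\<^sup>2 + (snd x)\<^sup>2 = (hgauge x)^4"
proof -
  define a where "a = (norm (fst x))\<^sup>2"
  define S where "S = sqrt (a\<^sup>2 + 4 * (snd x)\<^sup>2)"
  have S2: "S\<^sup>2 = a\<^sup>2 + 4 * (snd x)\<^sup>2" unfolding S_def by simp
  have N2: "(hgauge x)\<^sup>2 = (a + S) / 2"
    unfolding hgauge_power2 a_def S_def by (simp add: power2_eq_square eval_nat_numeral)
  have "(hgauge x)^4 = ((a + S) / 2)\<^sup>2" by (simp flip: N2 power_mult)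
  also have "\<dots> = a * ((a + S) / 2) + (snd x)\<^sup>2" using S2 by (simp add: power2_eq_square field_simps)
  finally show ?thesis using N2 unfolding a_def by simp
qed

lemma hgauge_power2_bounds: "(norm (fst x))\<^sup>2 \<le> (hgauge x)\<^sup>2" "\<bar>snd x\<bar> \<le> (hgauge x)\<^sup>2"
proof -
  define S where "S = sqrt ((norm (fst x))^4 + 4 * (snd x)\<^sup>2)"
  have N2: "2 * (hgauge x)\<^sup>2 = (norm (fst x))\<^sup>2 + S" unfolding hgauge_power2 S_def by simp
  have "(norm (fst x))\<^sup>2 \<le> S" unfolding S_def by (rule real_le_rsqrt) (simp add: power2_eq_square eval_nat_numeral)
  then show "(norm (fst x))\<^sup>2 \<le> (hgauge x)\<^sup>2" using N2 by linarith
  have "2 * \<bar>snd x\<bar> \<le> S" unfolding S_def by (rule real_le_rsqrt) (simp add: power2_eq_square)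
  then show "\<bar>snd x\<bar> \<le> (hgauge x)\<^sup>2" using N2 zero_le_power2[of "norm (fst x)"] by linarith
qed

lemma hgauge_le_D:
  assumes "hgauge x \<le> c"
  shows "norm (fst x) \<le> c" "\<bar>snd x\<bar> \<le> c\<^sup>2"
proof -
  have "c \<ge> 0" using assms hgauge_nonneg order_trans by blast
  moreover have "(hgauge x)\<^sup>2 \<le> c\<^sup>2" using assms hgauge_nonneg power_mono by blast
  ultimately show "norm (fst x) \<le> c" "\<bar>snd x\<bar> \<le> c\<^sup>2"
    using hgauge_power2_bounds[of x] by (meson order_trans power2_le_imp_le)+
qed

lemma hgauge_power2_diff_le:
  "\<bar>(hgauge x)\<^sup>2 - (hgauge y)\<^sup>2\<bar> \<le> \<bar>(norm (fst x))\<^sup>2 - (norm (fst y))\<^sup>2\<bar> + \<bar>snd x - snd y\<bar>"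
proof -
  define a where "a = (norm (fst x))\<^sup>2"
  define a' where "a' = (norm (fst y))\<^sup>2"
  define u where "u = Complex a (2 * snd x)"
  define v where "v = Complex a' (2 * snd y)"
  \<comment> \<open>the inner square root of the gauge is the modulus of \<open>u\<close>, which is 1-Lipschitz\<close>
  have N2: "(hgauge x)\<^sup>2 = (a + cmod u) / 2" "(hgauge y)\<^sup>2 = (a' + cmod v) / 2"
    unfolding hgauge_power2 a_def a'_def u_def v_def cmod_def by (simp_all add: power2_eq_square eval_nat_numeral)
  have "\<bar>cmod u - cmod v\<bar> \<le> cmod (u - v)" by (rule norm_triangle_ineq3)
  also have "\<dots> \<le> \<bar>a - a'\<bar> + \<bar>2 * snd x - 2 * snd y\<bar>"
    using cmod_le[of "u - v"] unfolding u_def v_def by simp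
  also have "\<bar>2 * snd x - 2 * snd y\<bar> = 2 * \<bar>snd x - snd y\<bar>"
    by (metis abs_mult abs_numeral right_diff_distrib)
  finally show ?thesis unfolding N2 a_def[symmetric] a'_def[symmetric]
    by (auto simp: field_simps abs_le_iff abs_if split: if_splits)
qed

lemma hgauge_vertical: "r \<ge> 0 \<Longrightarrow> hgauge ((0 :: complex ^ 'n::finite), r\<^sup>2) = r"
  unfolding hgauge_def by (simp add: power_mult_distrib real_sqrt_mult eval_nat_numeral)

lemma hgauge_eq_0_iff: "hgauge x = 0 \<longleftrightarrow> x = (0, 0)"
proof
  assume "hgauge x = 0"
  then have "(norm (fst x))\<^sup>2 \<le> 0" "\<bar>snd x\<bar> \<le> 0" using hgauge_power2_bounds[of x] by auto
  then show "x = (0, 0)" by (cases x) auto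
qed (simp add: hgauge_def)

lemma hgauge_pos: "x \<noteq> hzero \<Longrightarrow> 0 < hgauge x"
  using hgauge_nonneg[of x] hgauge_eq_0_iff[of x] unfolding hzero_def by (simp add: order_le_less)

lemma hgauge_minus: "hgauge (- z, - s) = hgauge (z, s)"
  unfolding hgauge_def by simp

lemma norm_hinner_le: "cmod (hinner a b) \<le> norm a * norm b"
proof -
  have "cmod (hinner a b) \<le> (\<Sum>j\<in>UNIV. cmod (cnj (a$j) * b$j))"
    unfolding hinner_def by (rule norm_sum)
  also have "\<dots> = (\<Sum>j\<in>UNIV. \<bar>cmod (a$j)\<bar> * \<bar>cmod (b$j)\<bar>)"
    by (simp add: norm_mult)
  also have "\<dots> \<le> L2_set (\<lambda>j. cmod (a$j)) UNIV * L2_set (\<lambda>j. cmod (b$j)) UNIV"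
    by (rule L2_set_mult_ineq)
  finally show ?thesis by (simp add: norm_vec_def)
qed

lemma abs_Im_hinner_le: "\<bar>Im (hinner a b)\<bar> \<le> norm a * norm b"
  using norm_hinner_le[of a b] abs_Im_le_cmod order_trans by blast

lemma abs_Re_hinner_le: "\<bar>Re (hinner a b)\<bar> \<le> norm a * norm b"
  using norm_hinner_le[of a b] abs_Re_le_cmod order_trans by blast

lemma Im_hinner_self: "Im (hinner a a) = 0"
  unfolding hinner_def by simp

lemma hinner_diff_right: "hinner a (b - c) = hinner a b - hinner a c"
  unfolding hinner_def by (simp add: algebra_simps sum_subtractf)

lemma hinner_minus_right: "hinner a (- b) = - hinner a b"
  unfolding hinner_def by (simp add: sum_negf)

lemma hinner_0_left: "hinner 0 b = 0"
  unfolding hinner_def by simp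

lemma hinner_0_right: "hinner b 0 = 0"
  unfolding hinner_def by simp

lemma norm_diff_power2_hinner: "(norm (w - z))\<^sup>2 = (norm z)\<^sup>2 - 2 * Re (hinner z w) + (norm w)\<^sup>2"
proof -
  have c: "\<And>u v :: complex. (cmod (v - u))\<^sup>2 = (cmod u)\<^sup>2 - 2 * Re (cnj u * v) + (cmod v)\<^sup>2"
    by (simp add: cmod_power2) (simp add: power2_eq_square algebra_simps)
  have "(norm (w - z))\<^sup>2 = (\<Sum>j\<in>UNIV. (cmod (z$j))\<^sup>2 - 2 * Re (cnj (z$j) * w$j) + (cmod (w$j))\<^sup>2)"
    unfolding norm_vec_power2_eq_sum by (rule sum.cong) (simp_all add: c)
  also have "\<dots> = (\<Sum>j\<in>UNIV. (cmod (z$j))\<^sup>2) - 2 * (\<Sum>j\<in>UNIV. Re (cnj (z$j) * w$j))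
      + (\<Sum>j\<in>UNIV. (cmod (w$j))\<^sup>2)"
    by (simp add: sum.distrib sum_subtractf sum_distrib_left)
  finally show ?thesis unfolding norm_vec_power2_eq_sum hinner_def by simp
qed

lemma norm_component_le: "cmod (v $ i) \<le> norm (v :: complex ^ 'n::finite)"
  unfolding norm_vec_def by (rule member_le_L2_set) simp_all


section \<open>Group operations in coordinates\<close>

lemma hmult_hinv_pair: "hmult (a, b) (hinv (z, \<tau>)) = (a - z, b - \<tau> - 1/2 * Im (hinner a z))"
  unfolding hmult_def hinv_def by (simp add: hinner_minus_right)

lemma hdist_pair: "hdist (a, b) (z, \<tau>) = hgauge (a - z, b - \<tau> - 1/2 * Im (hinner a z))"
  unfolding hdist_eq_hgauge hmult_hinv_pair ..

lemma hdist_hzero_left: "hdist hzero x = hgauge x"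
proof -
  have "hmult hzero (hinv x) = (- fst x, - snd x)"
    unfolding hmult_def hinv_def hzero_def by (simp add: hinner_0_left)
  then show ?thesis unfolding hdist_eq_hgauge by (metis hgauge_minus prod.collapse)
qed

lemma hdist_hzero_right: "hdist x hzero = hgauge x"
proof -
  have "hmult x (hinv hzero) = x"
    unfolding hmult_def hinv_def hzero_def by (simp add: hinner_0_right)
  then show ?thesis unfolding hdist_eq_hgauge by simp
qed

lemma hhat_pair: "hhat (z, \<tau>) = ((1 / hgauge (z, \<tau>)) *\<^sub>R z, (1 / hgauge (z, \<tau>))\<^sup>2 * \<tau>)"
  unfolding hhat_def hdil_def hdist_hzero_right by simp

lemma hrho_pair: "hgauge (z, \<tau>) > 0 \<Longrightarrow> hrho (z, \<tau>) i = cmod (z $ i) / hgauge (z, \<tau>)"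
  unfolding hrho_def hhat_pair by simp

lemma hphi_pair: "hgauge (z, \<tau>) > 0 \<Longrightarrow> hphi (z, \<tau>) i = Arg (z $ i)"
  unfolding hphi_def hhat_pair fst_conv vector_scaleR_component by (simp add: scaleR_conv_of_real)

lemma htau_pair: "htau (z, \<tau>) = (1 / hgauge (z, \<tau>))\<^sup>2 * \<tau>"
  unfolding htau_def hhat_pair by simp

lemma hshell_obtains_hsphere_point:
  fixes x p :: "'n::finite heis"
  assumes "x \<in> hshell t r p" "r > 0"
  obtains y where "hdist y p = r" "hdist x y < t + 1"
proof -
  have "hmult (fst p, snd p + r\<^sup>2) (hinv p) = (0, r\<^sup>2)"
    unfolding hmult_def hinv_def by (simp add: hinner_minus_right Im_hinner_self)
  then have "hdist (fst p, snd p + r\<^sup>2) p = r"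
    unfolding hdist_eq_hgauge using assms(2) by (simp add: hgauge_vertical)
  then have "hsphere r p \<noteq> {}" unfolding hsphere_def by blast
  moreover have "Inf ((\<lambda>y. hdist x y) ` hsphere r p) < t + 1"
    using assms(1) unfolding hshell_def hsetdist_def by simp
  ultimately obtain y where "y \<in> hsphere r p" "hdist x y < t + 1"
    using cInf_lessD[of "(\<lambda>y. hdist x y) ` hsphere r p"] by blast
  then show ?thesis using that unfolding hsphere_def by blast
qed

lemma hdist_power2_diff_le:
  fixes y p :: "'n::finite heis"
  defines "a \<equiv> hdist hzero y" and "N \<equiv> hdist p hzero"
  shows "\<bar>(hdist y p)\<^sup>2 - N\<^sup>2\<bar> \<le> 2 * a\<^sup>2 + 5/2 * (a * N)"
proof -
  obtain w h where y: "y = (w, h)" by (cases y)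
  obtain z \<tau> where p: "p = (z, \<tau>)" by (cases p)
  have a: "norm w \<le> a" "\<bar>h\<bar> \<le> a\<^sup>2"
    using hgauge_le_D[of "(w, h)" a] unfolding a_def y hdist_hzero_left by simp_all
  have N: "N = hgauge (- z, - \<tau>)" "norm z \<le> N" "0 \<le> N"
    using hgauge_power2_bounds(1)[of "(z, \<tau>)"] hgauge_nonneg[of "(z, \<tau>)"]
    unfolding N_def p hdist_hzero_right hgauge_minus by (auto intro: power2_le_imp_le)
  have zw: "norm z * norm w \<le> N * a" using N(2,3) a(1) by (intro mult_mono) auto
  have "\<bar>(hdist y p)\<^sup>2 - N\<^sup>2\<bar>
      \<le> \<bar>(norm (w - z))\<^sup>2 - (norm (- z))\<^sup>2\<bar> + \<bar>(h - \<tau> - 1/2 * Im (hinner w z)) - (- \<tau>)\<bar>"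
    using hgauge_power2_diff_le[of "(w - z, h - \<tau> - 1/2 * Im (hinner w z))" "(- z, - \<tau>)"]
    unfolding y p hdist_pair N(1) by simp
  also have "\<dots> \<le> (a\<^sup>2 + 2 * (N * a)) + (a\<^sup>2 + 1/2 * (a * N))"
  proof (rule add_mono)
    have "\<bar>Re (hinner z w)\<bar> \<le> N * a" using abs_Re_hinner_le[of z w] zw by linarith
    moreover have "(norm w)\<^sup>2 \<le> a\<^sup>2" using a(1) by (intro power_mono) auto
    ultimately show "\<bar>(norm (w - z))\<^sup>2 - (norm (- z))\<^sup>2\<bar> \<le> a\<^sup>2 + 2 * (N * a)"
      unfolding norm_diff_power2_hinner norm_minus_cancel abs_le_iff
      using zero_le_power2[of "norm w"] by linarith
    have "\<bar>Im (hinner w z)\<bar> \<le> a * N" using abs_Im_hinner_le[of w z] zw by (simp add: mult.commute)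
    then show "\<bar>(h - \<tau> - 1/2 * Im (hinner w z)) - (- \<tau>)\<bar> \<le> a\<^sup>2 + 1/2 * (a * N)"
      using a(2) by (simp add: abs_le_iff)
  qed
  finally show ?thesis by (simp add: algebra_simps)
qed

text \<open>A weak triangle inequality, obtained directly from the formula for the gauge.\<close>

lemma hdist_sphere_radius_close:
  fixes y p :: "'n::finite heis"
  assumes "0 < hdist y p" "hdist hzero y \<le> hdist y p"
  shows "\<bar>hdist y p - hdist p hzero\<bar> \<le> 5 * hdist hzero y"
proof -
  define \<rho> a N where "\<rho> = hdist y p" and "a = hdist hzero y" and "N = hdist p hzero"
  have a0: "a \<ge> 0" and N0: "N \<ge> 0"
    unfolding a_def N_def hdist_hzero_left hdist_hzero_right by (simp_all add: hgauge_nonneg)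
  have \<rho>: "0 < \<rho>" "a \<le> \<rho>" using assms unfolding \<rho>_def a_def by simp_all
  have "\<rho>\<^sup>2 - N\<^sup>2 = (\<rho> - N) * (\<rho> + N)" by (simp add: power2_eq_square algebra_simps)
  then have "\<bar>\<rho> - N\<bar> * (\<rho> + N) = \<bar>\<rho>\<^sup>2 - N\<^sup>2\<bar>" using \<rho> N0 by (simp add: abs_mult)
  also have "\<dots> \<le> 2 * a\<^sup>2 + 5/2 * (a * N)"
    using hdist_power2_diff_le[of y p] unfolding \<rho>_def a_def N_def .
  also have "\<dots> \<le> 5 * a * (\<rho> + N)"
  proof -
    have "a * a \<le> a * \<rho>" "0 \<le> a * \<rho>" "0 \<le> a * N" using \<rho> a0 N0 by (simp_all add: mult_left_mono)
    then show ?thesis by (simp add: power2_eq_square algebra_simps)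
  qed
  finally have "\<bar>\<rho> - N\<bar> * (\<rho> + N) \<le> 5 * a * (\<rho> + N)" .
  moreover have "\<rho> + N > 0" using \<rho> N0 by simp
  ultimately show ?thesis unfolding \<rho>_def a_def N_def by simp
qed

section \<open>Aligned coordinates\<close>

text \<open>The angle condition \<open>\<phi>\<^sub>j(p, q) < arccos 0.995\<close> in the form used by the estimates.\<close>

definition aligned :: "complex \<Rightarrow> complex \<Rightarrow> bool" where
  "aligned a b \<longleftrightarrow>
     995/1000 * (cmod a * cmod b) \<le> Re (cnj a * b) \<and> \<bar>Im (cnj b * a)\<bar> \<le> 1/10 * (cmod a * cmod b)"

lemma cnj_mult_polar:
  fixes a b :: complex
  shows "Re (cnj a * b) = cmod a * cmod b * cos (Arg a - Arg b)"
    and "Im (cnj b * a) = cmod a * cmod b * sin (Arg a - Arg b)"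
proof -
  have a: "a = of_real (cmod a) * cis (Arg a)" and b: "b = of_real (cmod b) * cis (Arg b)"
    using rcis_cmod_Arg[of a] rcis_cmod_Arg[of b] unfolding rcis_def by simp_all
  have "cnj a * b = of_real (cmod a * cmod b) * cis (Arg b - Arg a)"
    by (subst a, subst b) (simp add: cis_cnj cis_mult algebra_simps)
  then show "Re (cnj a * b) = cmod a * cmod b * cos (Arg a - Arg b)"
    by (simp add: cos_diff mult.assoc)
  have "cnj b * a = of_real (cmod a * cmod b) * cis (Arg a - Arg b)"
    by (subst a, subst b) (simp add: cis_cnj cis_mult algebra_simps)
  then show "Im (cnj b * a) = cmod a * cmod b * sin (Arg a - Arg b)"
    by (simp add: mult.assoc)
qed

lemma aligned_if_cos_Arg_diff_gt:
  assumes "cos (Arg a - Arg b) > 995/1000"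
  shows "aligned a b"
proof -
  define s where "s = sin (Arg a - Arg b)"
  have "s\<^sup>2 + (cos (Arg a - Arg b))\<^sup>2 = 1" unfolding s_def by simp
  moreover have "(995/1000)\<^sup>2 \<le> (cos (Arg a - Arg b))\<^sup>2" using assms by (intro power_mono) auto
  ultimately have "\<bar>s\<bar>\<^sup>2 \<le> (1/10)\<^sup>2" by (simp add: power_divide)
  then have "\<bar>s\<bar> \<le> 1/10" by (rule power2_le_imp_le) simp
  then have "\<bar>s\<bar> * (cmod a * cmod b) \<le> 1/10 * (cmod a * cmod b)" by (rule mult_right_mono) simp
  moreover have "995/1000 * (cmod a * cmod b) \<le> cmod a * cmod b * cos (Arg a - Arg b)"
    using mult_left_mono[of "995/1000" "cos (Arg a - Arg b)" "cmod a * cmod b"] assms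
    by (simp add: mult.commute)
  ultimately show ?thesis
    unfolding aligned_def cnj_mult_polar s_def[symmetric] by (simp add: abs_mult mult.commute)
qed


section \<open>Expanding the sphere equation\<close>

text \<open>
  Coordinatewise, the part of \<open>d((y, h), (z, \<tau>))\<^sup>4\<close> that is linear in the horizontal
  coordinate \<open>y\<close>; here \<open>s = r\<^sup>2\<close>.
\<close>

definition lin_term :: "real \<Rightarrow> real \<Rightarrow> complex \<Rightarrow> complex \<Rightarrow> real" where
  "lin_term s \<tau> a x = - 2 * s * Re (cnj a * x) + \<tau> * Im (cnj x * a)"

definition sphere_remainder :: "real \<Rightarrow> complex ^ 'n::finite \<Rightarrow> real \<Rightarrow> complex ^ 'n \<Rightarrow> real \<Rightarrow> real" where
  "sphere_remainder r z \<tau> y h = r\<^sup>2 * (norm y)\<^sup>2 + (h - 1/2 * Im (hinner y z))\<^sup>2 - 2 * \<tau> * h"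

lemma sphere_equation_expand:
  "(norm (y - z))\<^sup>2 * r\<^sup>2 + (h - \<tau> - 1/2 * Im (hinner y z))\<^sup>2
   = (norm z)\<^sup>2 * r\<^sup>2 + \<tau>\<^sup>2 + (\<Sum>i\<in>UNIV. lin_term (r\<^sup>2) \<tau> (z $ i) (y $ i)) + sphere_remainder r z \<tau> y h"
proof -
  have "(\<Sum>i\<in>UNIV. lin_term (r\<^sup>2) \<tau> (z $ i) (y $ i))
      = - 2 * r\<^sup>2 * (\<Sum>i\<in>UNIV. Re (cnj (z $ i) * y $ i)) + \<tau> * (\<Sum>i\<in>UNIV. Im (cnj (y $ i) * z $ i))"
    unfolding lin_term_def by (simp only: sum.distrib sum_distrib_left)
  also have "\<dots> = - 2 * r\<^sup>2 * Re (hinner z y) + \<tau> * Im (hinner y z)"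
    unfolding hinner_def by (simp only: Re_sum Im_sum)
  finally show ?thesis
    unfolding sphere_remainder_def norm_diff_power2_hinner by (simp add: power2_eq_square algebra_simps)
qed

lemma abs_lin_term_le: "\<bar>lin_term s \<tau> a x\<bar> \<le> (2 * \<bar>s\<bar> + \<bar>\<tau>\<bar>) * (cmod a * cmod x)"
proof -
  have "\<bar>Re (cnj a * x)\<bar> \<le> cmod a * cmod x" "\<bar>Im (cnj x * a)\<bar> \<le> cmod a * cmod x"
    by (metis abs_Re_le_cmod complex_mod_cnj norm_mult)
       (metis abs_Im_le_cmod complex_mod_cnj mult.commute norm_mult)
  then have "\<bar>- 2 * s * Re (cnj a * x)\<bar> \<le> 2 * \<bar>s\<bar> * (cmod a * cmod x)"
    and "\<bar>\<tau> * Im (cnj x * a)\<bar> \<le> \<bar>\<tau>\<bar> * (cmod a * cmod x)"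
    by (auto simp: abs_mult intro!: mult_left_mono)
  then show ?thesis unfolding lin_term_def by (simp add: algebra_simps)
qed

lemma lin_term_add: "lin_term s \<tau> a (x + y) = lin_term s \<tau> a x + lin_term s \<tau> a y"
  unfolding lin_term_def by (simp add: algebra_simps)

lemma lin_term_aligned_le:
  assumes "s \<ge> 0" "\<bar>\<tau>\<bar> \<le> 11/10 * s" "aligned a w"
  shows "lin_term s \<tau> a w \<le> - (188/100) * s * (cmod a * cmod w)"
proof -
  have "2 * s * (995/1000 * (cmod a * cmod w)) \<le> 2 * s * Re (cnj a * w)"
    using assms unfolding aligned_def by (intro mult_left_mono) auto
  moreover have "\<tau> * Im (cnj w * a) \<le> 11/10 * s * (1/10 * (cmod a * cmod w))"
  proof -
    have "\<tau> * Im (cnj w * a) \<le> \<bar>\<tau>\<bar> * \<bar>Im (cnj w * a)\<bar>" by (simp flip: abs_mult)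
    also have "\<dots> \<le> 11/10 * s * (1/10 * (cmod a * cmod w))"
      using assms unfolding aligned_def by (intro mult_mono) auto
    finally show ?thesis .
  qed
  ultimately show ?thesis unfolding lin_term_def by linarith
qed

text \<open>
  Moving the horizontal coordinate from \<open>v\<close> to \<open>w + u\<close>, with \<open>u, v\<close> small, raises \<open>lin_term\<close> by
  \<open>O(s T t)\<close>: either \<open>a\<close> itself is \<open>O(T)\<close>, or \<open>w\<close> is so long that the negative aligned
  contribution of \<open>w\<close> absorbs those of \<open>u\<close> and \<open>v\<close>.
\<close>

lemma lin_term_displacement_le:
  assumes s: "s \<ge> 0" and \<tau>: "\<bar>\<tau>\<bar> \<le> 11/10 * s" and aligned: "aligned a w"
    and u: "cmod u \<le> 2 * t" and v: "cmod v \<le> 2 * t" and "t \<ge> 0" "T \<ge> 0"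
    and cases: "cmod a \<le> 11 * T \<or> 9 * t \<le> cmod w"
  shows "lin_term s \<tau> a w + lin_term s \<tau> a u - lin_term s \<tau> a v \<le> 150 * s * T * t"
proof -
  define P where "P = cmod a * cmod w"
  have w: "lin_term s \<tau> a w \<le> - (188/100) * s * P"
    unfolding P_def by (rule lin_term_aligned_le[OF s \<tau> aligned])
  have coeff: "2 * \<bar>s\<bar> + \<bar>\<tau>\<bar> \<le> 31/10 * s" using s \<tau> by simp
  have uv: "\<bar>lin_term s \<tau> a x\<bar> \<le> 31/10 * s * (cmod a * cmod x)" for x
    using order_trans[OF abs_lin_term_le[of s \<tau> a x] mult_right_mono[OF coeff]] by simp
  from cases show ?thesis
  proof
    assume a: "cmod a \<le> 11 * T"
    have "0 \<le> s * P" using s unfolding P_def by simp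
    moreover have small: "31/10 * s * (cmod a * cmod x) \<le> 31/10 * s * (11 * T * (2 * t))"
      if "cmod x \<le> 2 * t" for x
      using a that assms by (intro mult_left_mono mult_mono) auto
    ultimately have "lin_term s \<tau> a w + lin_term s \<tau> a u - lin_term s \<tau> a v
        \<le> 31/10 * s * (11 * T * (2 * t)) + 31/10 * s * (11 * T * (2 * t))"
      using w uv[of u, unfolded abs_le_iff] uv[of v, unfolded abs_le_iff] small[OF u] small[OF v] by linarith
    also have "\<dots> \<le> 150 * s * T * t" using assms by (simp add: algebra_simps)
    finally show ?thesis .
  next
    assume long: "9 * t \<le> cmod w"
    have small: "31/10 * s * (cmod a * cmod x) \<le> 31/10 * s * (2/9 * P)" if "cmod x \<le> 2 * t" for x
    proof -
      have "cmod a * cmod x \<le> cmod a * (2/9 * cmod w)" using that long by (intro mult_left_mono) auto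
      then show ?thesis using s unfolding P_def by (intro mult_left_mono) (simp_all add: algebra_simps)
    qed
    have "lin_term s \<tau> a w + lin_term s \<tau> a u - lin_term s \<tau> a v
        \<le> - (188/100) * s * P + 31/10 * s * (2/9 * P) + 31/10 * s * (2/9 * P)"
      using w uv[of u, unfolded abs_le_iff] uv[of v, unfolded abs_le_iff] small[OF u] small[OF v] by linarith
    also have "\<dots> \<le> 0" using s unfolding P_def by (simp add: algebra_simps)
    also have "0 \<le> 150 * s * T * t" using assms by simp
    finally show ?thesis .
  qed
qed

lemma sum_lin_term_diff_le:
  fixes z w w0 w1 :: "complex ^ 'n::finite"
  assumes "s \<ge> 0" "\<bar>\<tau>\<bar> \<le> 11/10 * s" "\<And>i. aligned (z $ i) (w $ i)"
    and "\<And>i. cmod (z $ i) \<le> 11 * T \<or> 9 * t \<le> cmod (w $ i)"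
    and "norm (w1 - w) \<le> 2 * t" "norm w0 \<le> 2 * t" "t \<ge> 0" "T \<ge> 0"
  shows "(\<Sum>i\<in>UNIV. lin_term s \<tau> (z $ i) (w1 $ i)) - (\<Sum>i\<in>UNIV. lin_term s \<tau> (z $ i) (w0 $ i))
    \<le> real CARD('n) * (150 * s * T * t)"
proof -
  have "(\<Sum>i\<in>UNIV. lin_term s \<tau> (z $ i) (w1 $ i)) - (\<Sum>i\<in>UNIV. lin_term s \<tau> (z $ i) (w0 $ i))
      = (\<Sum>i\<in>UNIV. lin_term s \<tau> (z $ i) (w $ i) + lin_term s \<tau> (z $ i) ((w1 - w) $ i)
          - lin_term s \<tau> (z $ i) (w0 $ i))"
    by (simp add: sum_subtractf flip: lin_term_add)
  also have "\<dots> \<le> (\<Sum>i\<in>(UNIV :: 'n set). 150 * s * T * t)"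
  proof (intro sum_mono lin_term_displacement_le)
    show "cmod ((w1 - w) $ i) \<le> 2 * t" "cmod (w0 $ i) \<le> 2 * t" for i
      using assms norm_component_le[of "w1 - w" i] norm_component_le[of w0 i] by linarith+
  qed (use assms in auto)
  finally show ?thesis by simp
qed


section \<open>The aligned configuration is inconsistent\<close>

lemma abs_le_of_quartic:
  fixes a b N :: real
  assumes "a\<^sup>2 * N\<^sup>2 + b\<^sup>2 = N^4"
  shows "\<bar>b\<bar> \<le> N\<^sup>2"
proof -
  have "0 \<le> a\<^sup>2 * N\<^sup>2" by simp
  then have "b\<^sup>2 \<le> N^4" using assms by linarith
  then have "b\<^sup>2 \<le> (N\<^sup>2)\<^sup>2" by (simp add: power_mult[symmetric])
  then show ?thesis by (metis abs_ge_zero power2_abs power2_le_imp_le zero_le_power2)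
qed

lemma le_of_quartic_nearly_vertical:
  fixes a b N :: real
  assumes "a\<^sup>2 * N\<^sup>2 + b\<^sup>2 = N^4" "0 < N" "0 \<le> a" "99/100 * N\<^sup>2 \<le> \<bar>b\<bar>"
  shows "a \<le> 15/100 * N"
proof -
  have "(99/100 * N\<^sup>2)\<^sup>2 \<le> \<bar>b\<bar>\<^sup>2" using assms(4) by (intro power_mono) auto
  then have "9801/10000 * (N\<^sup>2)\<^sup>2 \<le> b\<^sup>2" by (simp only: power_mult_distrib power2_abs) (simp add: power_divide)
  then have "a\<^sup>2 * N\<^sup>2 \<le> 199/10000 * (N\<^sup>2)\<^sup>2" using assms(1) by (simp add: power_mult[symmetric])
  then have "a\<^sup>2 * N\<^sup>2 \<le> (199/10000 * N\<^sup>2) * N\<^sup>2" by (simp add: power2_eq_square)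
  then have "a\<^sup>2 \<le> 199/10000 * N\<^sup>2" using assms(2) by simp
  also have "\<dots> \<le> (15/100 * N)\<^sup>2" by (simp only: power_mult_distrib) (simp add: power_divide)
  finally have "a\<^sup>2 \<le> (15/100 * N)\<^sup>2" .
  then show ?thesis by (rule power2_le_imp_le) (use assms in simp)
qed

lemma power2_bounds_of_near:
  fixes x N :: real
  assumes "0 < x" "99/100 * x \<le> N" "N \<le> 101/100 * x"
  shows "98/100 * x\<^sup>2 \<le> N\<^sup>2" "N\<^sup>2 \<le> 103/100 * x\<^sup>2"
proof -
  have "(99/100 * x)\<^sup>2 \<le> N\<^sup>2" "N\<^sup>2 \<le> (101/100 * x)\<^sup>2" using assms by (intro power_mono; simp)+
  then show "98/100 * x\<^sup>2 \<le> N\<^sup>2" "N\<^sup>2 \<le> 103/100 * x\<^sup>2" by (simp_all add: power2_eq_square)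
qed

text \<open>
  The configuration of the proof idea, in coordinates: \<open>p = (z, \<tau>)\<close> and \<open>q = (w, \<sigma>)\<close> with
  gauges \<open>Np\<close> and \<open>Nq\<close>, and \<open>y\<^sub>0 = (w0, h0)\<close>, \<open>y\<^sub>1 = (w1, h1)\<close> on the sphere of radius \<open>r\<close> about \<open>p\<close>.
\<close>

locale aligned_configuration =
  fixes z w w0 w1 :: "complex ^ 'n::finite" and \<tau> \<sigma> h0 h1 Np Nq r r' t t' T :: real
  assumes Np_pos: "0 < Np" and Nq_pos: "0 < Nq"
    and gauge_p: "(norm z)\<^sup>2 * Np\<^sup>2 + \<tau>\<^sup>2 = Np^4"
    and gauge_q: "(norm w)\<^sup>2 * Nq\<^sup>2 + \<sigma>\<^sup>2 = Nq^4"
    and y0_on_sphere: "(norm (w0 - z))\<^sup>2 * r\<^sup>2 + (h0 - \<tau> - 1/2 * Im (hinner w0 z))\<^sup>2 = r^4"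
    and y1_on_sphere: "(norm (w1 - z))\<^sup>2 * r\<^sup>2 + (h1 - \<tau> - 1/2 * Im (hinner w1 z))\<^sup>2 = r^4"
    and y0_near_0: "norm w0 \<le> 2 * t" "\<bar>h0\<bar> \<le> (2 * t)\<^sup>2"
    and y1_near_q: "norm (w - w1) \<le> 2 * t" "\<bar>\<sigma> - h1 - 1/2 * Im (hinner w w1)\<bar> \<le> (2 * t)\<^sup>2"
    and Np_near: "\<bar>r - Np\<bar> \<le> 10 * t" and Nq_near: "\<bar>r' - Nq\<bar> \<le> 10 * t'"
    and t_ge_1: "1 \<le> t" "1 \<le> t'" and T_ge: "t * t' \<le> T"
    and r'_large: "1000 * (real CARD('n) + 1) * T \<le> r'"
    and r_large: "100 * r' \<le> r"
    and p_vertical: "99/100 \<le> \<bar>(1/Np)\<^sup>2 * \<tau>\<bar>"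
    and hats_close: "norm ((1/Np) *\<^sub>R z - (1/Nq) *\<^sub>R w) \<le> 1/100"
      "\<bar>(1/Np)\<^sup>2 * \<tau> - (1/Nq)\<^sup>2 * \<sigma> - 1/2 * Im (hinner ((1/Np) *\<^sub>R z) ((1/Nq) *\<^sub>R w))\<bar> \<le> 1/10000"
    and coords_aligned: "\<And>i. aligned (z $ i) (w $ i)"
    and coords_dichotomy: "\<And>i. cmod (z $ i) / Np < 10 * T / r \<or> 10 * T / r' \<le> cmod (w $ i) / Nq"
begin

lemma parameter_bounds:
  shows "0 \<le> t" "t \<le> T" "t' \<le> T" "1 \<le> T" "T \<le> r'/1000" "t \<le> r'/1000"
    and "real CARD('n) * T \<le> r'/1000" "0 < r'" "0 < r"
proof -
  show t0: "0 \<le> t" using t_ge_1 by simp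
  show tT: "t \<le> T" using mult_left_mono[OF t_ge_1(2) t0] T_ge by simp
  have "1 * t' \<le> t * t'" by (rule mult_right_mono[OF t_ge_1(1)]) (use t_ge_1 in simp)
  then show "t' \<le> T" using T_ge by linarith
  show T1: "1 \<le> T" using tT t_ge_1 by simp
  have "1000 * T \<le> 1000 * (real CARD('n) + 1) * T" "1000 * real CARD('n) * T \<le> 1000 * (real CARD('n) + 1) * T"
    using T1 by (simp_all add: mult_right_mono)
  then show T1000: "T \<le> r'/1000" and "real CARD('n) * T \<le> r'/1000" using r'_large by simp_all
  then show "t \<le> r'/1000" using tT by simp
  show "0 < r'" using T1 T1000 by simp
  then show "0 < r" using r_large by simp
qed

lemma gauge_bounds: "99/100 * r \<le> Np" "Np \<le> 101/100 * r" "99/100 * r' \<le> Nq" "Nq \<le> 101/100 * r'"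
  using Np_near Nq_near parameter_bounds r_large by (simp_all add: abs_le_iff)

lemma gauge_power2_bounds:
  "98/100 * r\<^sup>2 \<le> Np\<^sup>2" "Np\<^sup>2 \<le> 103/100 * r\<^sup>2" "98/100 * r'\<^sup>2 \<le> Nq\<^sup>2" "Nq\<^sup>2 \<le> 103/100 * r'\<^sup>2"
  using power2_bounds_of_near[of r Np] power2_bounds_of_near[of r' Nq] gauge_bounds parameter_bounds
  by simp_all

lemma abs_tau_le: "\<bar>\<tau>\<bar> \<le> 103/100 * r\<^sup>2"
  using abs_le_of_quartic[OF gauge_p] gauge_power2_bounds by simp

lemma abs_sigma_le: "\<bar>\<sigma>\<bar> \<le> 103/100 * r'\<^sup>2"
  using abs_le_of_quartic[OF gauge_q] gauge_power2_bounds by simp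

lemma norm_z_le: "norm z \<le> 15/100 * Np" "norm z \<le> 16/100 * r"
proof -
  have "99/100 * Np\<^sup>2 \<le> \<bar>\<tau>\<bar>"
    using p_vertical Np_pos by (simp add: abs_mult power_divide le_divide_eq)
  then show "norm z \<le> 15/100 * Np" using le_of_quartic_nearly_vertical[OF gauge_p Np_pos] by simp
  then show "norm z \<le> 16/100 * r" using gauge_bounds parameter_bounds by linarith
qed

lemma norm_w_le: "norm w \<le> 16/100 * Nq" "norm w \<le> 1616/10000 * r'"
proof -
  have "norm ((1/Nq) *\<^sub>R w) \<le> norm ((1/Np) *\<^sub>R z) + norm ((1/Np) *\<^sub>R z - (1/Nq) *\<^sub>R w)"
    using norm_triangle_ineq4[of "(1/Np) *\<^sub>R z" "(1/Np) *\<^sub>R z - (1/Nq) *\<^sub>R w"] by simp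
  moreover have "norm z / Np \<le> 15/100" using norm_z_le Np_pos by (simp add: divide_le_eq)
  ultimately have "norm w / Nq \<le> 16/100" using hats_close(1) Np_pos Nq_pos by simp
  then show "norm w \<le> 16/100 * Nq" using Nq_pos by (simp add: divide_le_eq)
  then show "norm w \<le> 1616/10000 * r'" using gauge_bounds parameter_bounds by linarith
qed

text \<open>
  \<open>\<hat>p\<close> is nearly vertical and \<open>\<hat>q\<close> is close to it, so \<open>\<hat>q\<close> is nearly vertical on the
  same side.
\<close>

lemma tau_sigma_ge: "92/100 * (r\<^sup>2 * r'\<^sup>2) \<le> \<tau> * \<sigma>"
proof -
  define th qh where "th = (1/Np)\<^sup>2 * \<tau>" and "qh = (1/Nq)\<^sup>2 * \<sigma>"
  have th1: "\<bar>th\<bar> \<le> 1"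
    using abs_le_of_quartic[OF gauge_p] Np_pos unfolding th_def
    by (simp add: abs_mult power_divide divide_le_eq)
  have "(99/100)\<^sup>2 \<le> \<bar>th\<bar>\<^sup>2" using p_vertical unfolding th_def by (intro power_mono) auto
  then have th2: "9801/10000 \<le> th\<^sup>2" by (simp add: power_divide)
  have "\<bar>Im (hinner ((1/Np) *\<^sub>R z) ((1/Nq) *\<^sub>R w))\<bar> \<le> norm ((1/Np) *\<^sub>R z) * norm ((1/Nq) *\<^sub>R w)"
    by (rule abs_Im_hinner_le)
  also have "\<dots> \<le> 15/100 * (16/100)"
    using norm_z_le norm_w_le Np_pos Nq_pos by (intro mult_mono) (auto simp: divide_le_eq)
  finally have "\<bar>th - qh\<bar> \<le> 121/10000"
    using hats_close(2)[folded th_def qh_def] unfolding abs_le_iff by linarith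
  then have "\<bar>th * (th - qh)\<bar> \<le> 1 * (121/10000)" unfolding abs_mult using th1 by (intro mult_mono) auto
  moreover have "th * qh = th\<^sup>2 - th * (th - qh)" by (simp add: power2_eq_square algebra_simps)
  ultimately have prod: "96/100 \<le> th * qh" using th2 by (simp add: abs_le_iff)
  have "(98/100 * r\<^sup>2) * (98/100 * r'\<^sup>2) \<le> Np\<^sup>2 * Nq\<^sup>2"
    using gauge_power2_bounds by (intro mult_mono) auto
  then have NN: "9604/10000 * (r\<^sup>2 * r'\<^sup>2) \<le> Np\<^sup>2 * Nq\<^sup>2" by (simp add: algebra_simps)
  have "96/100 * (9604/10000 * (r\<^sup>2 * r'\<^sup>2)) \<le> (th * qh) * (Np\<^sup>2 * Nq\<^sup>2)"
    by (rule mult_mono[OF prod NN]) (use prod in auto)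
  moreover have "\<tau> * \<sigma> = (th * qh) * (Np\<^sup>2 * Nq\<^sup>2)"
    unfolding th_def qh_def using Np_pos Nq_pos by (simp add: power_divide field_simps)
  moreover have "0 \<le> r\<^sup>2 * r'\<^sup>2" by simp
  ultimately show ?thesis by linarith
qed


lemma norm_w1_le: "norm w1 \<le> 17/100 * r'"
proof -
  have "norm w1 \<le> norm w + norm (w1 - w)" using norm_triangle_ineq[of w "w1 - w"] by simp
  then show ?thesis using norm_w_le y1_near_q(1) parameter_bounds by (simp add: norm_minus_commute)
qed

lemma h1_near_sigma: "\<bar>h1 - \<sigma>\<bar> \<le> 17/100000 * r'\<^sup>2"
proof -
  have "hinner w w1 = hinner w (w1 - w) + hinner w w" by (simp add: hinner_diff_right)
  then have "\<bar>Im (hinner w w1)\<bar> \<le> norm w * norm (w1 - w)"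
    using abs_Im_hinner_le[of w "w1 - w"] by (simp add: Im_hinner_self)
  also have "\<dots> \<le> 1616/10000 * r' * (2 * t)"
    using norm_w_le y1_near_q(1) parameter_bounds by (intro mult_mono) (auto simp: norm_minus_commute)
  finally have "\<bar>h1 - \<sigma>\<bar> \<le> (2 * t)\<^sup>2 + 1616/10000 * (r' * t)"
    using y1_near_q(2) unfolding abs_le_iff by linarith
  also have "\<dots> \<le> 4/1000 * (r' * t) + 1616/10000 * (r' * t)"
    using mult_right_mono[of t "r'/1000" t] parameter_bounds by (simp add: power2_eq_square)
  also have "\<dots> \<le> 17/100 * (r' * (r'/1000))"
    using parameter_bounds by (simp add: mult_left_mono)
  finally show ?thesis by (simp add: power2_eq_square)
qed

lemma vertical_term_y1_le: "(h1 - 1/2 * Im (hinner w1 z))\<^sup>2 \<le> 6/10000 * (r\<^sup>2 * r'\<^sup>2)"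
proof -
  have "\<bar>h1\<bar> \<le> 104/100 * r'\<^sup>2"
    using abs_sigma_le h1_near_sigma abs_triangle_ineq2[of h1 \<sigma>] zero_le_power2[of r'] by linarith
  then have "h1\<^sup>2 \<le> (104/100 * r'\<^sup>2)\<^sup>2" by (simp add: power2_le_iff_abs_le)
  also have "\<dots> = 10816/10000 * (r'\<^sup>2 * r'\<^sup>2)" by (simp add: power2_eq_square)
  also have "\<dots> \<le> 10816/10000 * (r'\<^sup>2 * (r\<^sup>2 / 10000))"
    using power_mono[of "100 * r'" r 2] r_large parameter_bounds
    by (intro mult_left_mono) (auto simp: power_mult_distrib)
  finally have h1: "h1\<^sup>2 \<le> 10816/100000000 * (r\<^sup>2 * r'\<^sup>2)" by (simp add: algebra_simps)
  have "\<bar>Im (hinner w1 z)\<bar> \<le> norm w1 * norm z" by (rule abs_Im_hinner_le)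
  also have "\<dots> \<le> 17/100 * r' * (16/100 * r)"
    using norm_w1_le norm_z_le parameter_bounds by (intro mult_mono) auto
  finally have "(Im (hinner w1 z))\<^sup>2 \<le> (17/100 * r' * (16/100 * r))\<^sup>2"
    by (simp add: power2_le_iff_abs_le)
  also have "\<dots> = 73984/100000000 * (r\<^sup>2 * r'\<^sup>2)" by (simp add: power2_eq_square)
  finally have I: "(Im (hinner w1 z))\<^sup>2 \<le> 73984/100000000 * (r\<^sup>2 * r'\<^sup>2)" .
  have "0 \<le> (h1 + 1/2 * Im (hinner w1 z))\<^sup>2" by simp
  then have "(h1 - 1/2 * Im (hinner w1 z))\<^sup>2 \<le> 2 * h1\<^sup>2 + 1/2 * (Im (hinner w1 z))\<^sup>2"
    by (simp add: power2_eq_square algebra_simps)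
  moreover have "0 \<le> r\<^sup>2 * r'\<^sup>2" by simp
  ultimately show ?thesis using h1 I by linarith
qed

lemma remainder_y1_le: "sphere_remainder r z \<tau> w1 h1 \<le> - (18/10) * (r\<^sup>2 * r'\<^sup>2)"
proof -
  have "(norm w1)\<^sup>2 \<le> (17/100 * r')\<^sup>2" using norm_w1_le by (intro power_mono) auto
  then have "r\<^sup>2 * (norm w1)\<^sup>2 \<le> r\<^sup>2 * (289/10000 * r'\<^sup>2)"
    by (intro mult_left_mono) (simp_all add: power_mult_distrib power_divide)
  moreover have "\<bar>\<tau> * (h1 - \<sigma>)\<bar> \<le> (103/100 * r\<^sup>2) * (17/100000 * r'\<^sup>2)"
    unfolding abs_mult using abs_tau_le h1_near_sigma by (intro mult_mono) auto
  moreover have "- 2 * \<tau> * h1 = - 2 * (\<tau> * \<sigma>) - 2 * (\<tau> * (h1 - \<sigma>))" by (simp add: algebra_simps)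
  ultimately show ?thesis
    using vertical_term_y1_le tau_sigma_ge zero_le_power2[of r] zero_le_power2[of r']
    unfolding sphere_remainder_def abs_le_iff by (simp add: algebra_simps)
qed

lemma remainder_y0_ge: "- (1/10000) * (r\<^sup>2 * r'\<^sup>2) \<le> sphere_remainder r z \<tau> w0 h0"
proof -
  have "t\<^sup>2 \<le> (r'/1000)\<^sup>2" using parameter_bounds by (intro power_mono) auto
  then have "r\<^sup>2 * t\<^sup>2 \<le> r\<^sup>2 * (r'/1000)\<^sup>2" by (rule mult_left_mono) simp
  then have rt: "r\<^sup>2 * t\<^sup>2 \<le> (r\<^sup>2 * r'\<^sup>2) / 1000000" by (simp add: power_divide)
  have "\<bar>\<tau> * h0\<bar> \<le> (103/100 * r\<^sup>2) * (2 * t)\<^sup>2"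
    unfolding abs_mult using abs_tau_le y0_near_0(2) by (intro mult_mono) auto
  then have "\<bar>\<tau> * h0\<bar> \<le> 412/100 * (r\<^sup>2 * t\<^sup>2)" by (simp add: power_mult_distrib)
  then have "- (1/10000) * (r\<^sup>2 * r'\<^sup>2) \<le> - 2 * \<tau> * h0" using rt by (simp add: abs_le_iff)
  moreover have "0 \<le> r\<^sup>2 * (norm w0)\<^sup>2 + (h0 - 1/2 * Im (hinner w0 z))\<^sup>2" by simp
  ultimately show ?thesis unfolding sphere_remainder_def by linarith
qed

lemma coords_small_or_long: "cmod (z $ i) \<le> 11 * T \<or> 9 * t \<le> cmod (w $ i)"
  using coords_dichotomy[of i]
proof
  assume "cmod (z $ i) / Np < 10 * T / r"
  then have "cmod (z $ i) < 10 * T / r * Np" using Np_pos by (simp add: pos_divide_less_eq)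
  also have "\<dots> \<le> 10 * T / r * (101/100 * r)"
    using gauge_bounds parameter_bounds by (intro mult_left_mono) auto
  finally show ?thesis using parameter_bounds by simp
next
  assume "10 * T / r' \<le> cmod (w $ i) / Nq"
  then have "10 * T / r' * Nq \<le> cmod (w $ i)" using Nq_pos by (simp add: pos_le_divide_eq)
  moreover have "10 * T / r' * (99/100 * r') \<le> 10 * T / r' * Nq"
    using gauge_bounds parameter_bounds by (intro mult_left_mono) auto
  ultimately show ?thesis using parameter_bounds by simp
qed

lemma lin_terms_diff_le:
  "(\<Sum>i\<in>UNIV. lin_term (r\<^sup>2) \<tau> (z $ i) (w1 $ i)) - (\<Sum>i\<in>UNIV. lin_term (r\<^sup>2) \<tau> (z $ i) (w0 $ i))
    \<le> 15/100000 * (r\<^sup>2 * r'\<^sup>2)"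
proof -
  have "\<bar>\<tau>\<bar> \<le> 11/10 * r\<^sup>2" using abs_tau_le zero_le_power2[of r] by linarith
  then have "(\<Sum>i\<in>UNIV. lin_term (r\<^sup>2) \<tau> (z $ i) (w1 $ i)) - (\<Sum>i\<in>UNIV. lin_term (r\<^sup>2) \<tau> (z $ i) (w0 $ i))
      \<le> real CARD('n) * (150 * r\<^sup>2 * T * t)"
    using coords_aligned coords_small_or_long y1_near_q(1) y0_near_0(1) parameter_bounds
    by (intro sum_lin_term_diff_le) (auto simp: norm_minus_commute)
  also have "\<dots> \<le> 15/100000 * (r\<^sup>2 * r'\<^sup>2)"
  proof -
    have "(real CARD('n) * T) * t \<le> (r'/1000) * (r'/1000)"
      using parameter_bounds by (intro mult_mono) auto
    then have "150 * r\<^sup>2 * ((real CARD('n) * T) * t) \<le> 150 * r\<^sup>2 * ((r'/1000) * (r'/1000))"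
      by (rule mult_left_mono) simp
    then show ?thesis by (simp add: power2_eq_square algebra_simps)
  qed
  finally show ?thesis .
qed

text \<open>
  Both \<open>y\<^sub>0\<close> and \<open>y\<^sub>1\<close> satisfy the expanded sphere equation, but their remainders differ
  by far more than their linear terms.
\<close>

theorem inconsistent: False
proof -
  have "r^4 = (norm z)\<^sup>2 * r\<^sup>2 + \<tau>\<^sup>2 + (\<Sum>i\<in>UNIV. lin_term (r\<^sup>2) \<tau> (z $ i) (w1 $ i))
      + sphere_remainder r z \<tau> w1 h1"
    "r^4 = (norm z)\<^sup>2 * r\<^sup>2 + \<tau>\<^sup>2 + (\<Sum>i\<in>UNIV. lin_term (r\<^sup>2) \<tau> (z $ i) (w0 $ i))
      + sphere_remainder r z \<tau> w0 h0"
    using y1_on_sphere y0_on_sphere unfolding sphere_equation_expand by simp_all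
  moreover have "0 < r\<^sup>2 * r'\<^sup>2" using parameter_bounds by simp
  ultimately show False using lin_terms_diff_le remainder_y1_le remainder_y0_ge by linarith
qed

end


lemma hshell_hzero_radius_near:
  fixes p :: "'n::finite heis"
  assumes "hzero \<in> hshell t r p" "1 \<le> t" "2 * t \<le> r"
  shows "\<bar>r - hgauge p\<bar> \<le> 10 * t"
proof -
  obtain y where y: "hdist y p = r" "hdist hzero y < t + 1"
    using hshell_obtains_hsphere_point[OF assms(1)] assms(2,3) by auto
  then have "\<bar>r - hdist p hzero\<bar> \<le> 5 * hdist hzero y"
    using hdist_sphere_radius_close[of y p] assms(2,3) by simp
  then show ?thesis using y(2) assms(2) unfolding hdist_hzero_right by simp
qed

lemma aligned_if_hphi2_lt:
  assumes "hgauge (z, \<tau>) > 0" "hgauge (w, \<sigma>) > 0" "hphi2 (z, \<tau>) (w, \<sigma>) i < arccos (995/1000)"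
  shows "aligned (z $ i) (w $ i)"
proof (rule aligned_if_cos_Arg_diff_gt)
  have "arccos (cos (Arg (z $ i) - Arg (w $ i))) < arccos (995/1000)"
    using assms unfolding hphi2_def by (simp add: hphi_pair)
  then show "cos (Arg (z $ i) - Arg (w $ i)) > 995/1000"
    using arccos_less_mono[of "cos (Arg (z $ i) - Arg (w $ i))" "995/1000"] by simp
qed

lemma lemma13_scale_bounds:
  fixes t t' T R r r' \<epsilon> c :: real
  assumes t: "1 \<le> t" "1 \<le> t'" "t * t' \<le> T" and c: "0 \<le> c"
    and r: "r' \<le> r" "T * R \<le> r'" "r' \<le> \<epsilon> * r" "\<epsilon> < 1/100" "1000 * (c + 1) < R"
  shows "1000 * (c + 1) * T \<le> r'" "100 * r' \<le> r" "2 * t \<le> r'" "2 * t' \<le> r'" "0 < r'" "0 < r"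
proof -
  have "t * 1 \<le> t * t'" "1 * t' \<le> t * t'" using t by (intro mult_left_mono mult_right_mono; simp)+
  then have T: "t \<le> T" "t' \<le> T" "1 \<le> T" using t by linarith+
  have "1000 * (c + 1) * T \<le> R * T" by (rule mult_right_mono) (use r(5) T in auto)
  then show r'_large: "1000 * (c + 1) * T \<le> r'" using r(2) by (metis mult.commute order_trans)
  moreover have "0 \<le> c * T" using c T by simp
  ultimately have "1000 * T \<le> r'" by (simp add: algebra_simps)
  then show r': "2 * t \<le> r'" "2 * t' \<le> r'" "0 < r'" using T by linarith+
  have "\<epsilon> * r \<le> 1/100 * r" using r(1,4) r' by (intro mult_right_mono) auto
  then show "100 * r' \<le> r" "0 < r" using r(1,3) r' by linarith+
qed

lemma lemma13_explicit:
  fixes p q :: "'n::finite heis"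
  assumes p0: "p \<noteq> hzero" and q0: "q \<noteq> hzero" and t: "1 \<le> t" "1 \<le> t'" "t * t' \<le> T"
    and r: "r' \<le> r" "T * R \<le> r'" "r' \<le> \<epsilon> * r" "\<epsilon> < 1/100" "1000 * (real CARD('n) + 1) < R"
    and shells: "q \<in> hshell t r p" "hzero \<in> hshell t r p" "hzero \<in> hshell t' r' q"
    and vertical: "99/100 \<le> \<bar>htau p\<bar>" and angles: "\<And>i. hphi2 p q i < arccos (995/1000)"
  shows "(\<exists>i. i \<notin> {j. hrho p j < 10 * T / r} \<and> hrho q i < 10 * T / r') \<or>
    hdist (hhat p) (hhat q) > 1/100"
proof (rule ccontr)
  assume "\<not> ?thesis"
  then have close: "hdist (hhat p) (hhat q) \<le> 1/100"
    and dichotomy: "\<forall>i. hrho p i < 10 * T / r \<or> 10 * T / r' \<le> hrho q i" by auto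
  obtain z \<tau> w \<sigma> where pq: "p = (z, \<tau>)" "q = (w, \<sigma>)" by (cases p, cases q)
  define Np Nq where "Np = hgauge (z, \<tau>)" and "Nq = hgauge (w, \<sigma>)"
  have N: "0 < Np" "0 < Nq" using hgauge_pos[OF p0] hgauge_pos[OF q0] unfolding Np_def Nq_def pq .
  have r': "1000 * (real CARD('n) + 1) * T \<le> r'" "100 * r' \<le> r" "2 * t \<le> r'" "2 * t' \<le> r'"
      "0 < r'" "0 < r"
    using lemma13_scale_bounds[OF t _ r] by simp_all
  obtain w1 h1 where y1: "hdist (w1, h1) p = r" "hdist q (w1, h1) < t + 1"
    using hshell_obtains_hsphere_point[OF shells(1)] r' by (metis prod.collapse)
  obtain w0 h0 where y0: "hdist (w0, h0) p = r" "hdist hzero (w0, h0) < t + 1"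
    using hshell_obtains_hsphere_point[OF shells(2)] r' by (metis prod.collapse)
  interpret aligned_configuration z w w0 w1 \<tau> \<sigma> h0 h1 Np Nq r r' t t' T
  proof
    show "\<bar>r - Np\<bar> \<le> 10 * t" "\<bar>r' - Nq\<bar> \<le> 10 * t'"
      using hshell_hzero_radius_near[OF shells(2)] hshell_hzero_radius_near[OF shells(3)] r' t
      unfolding Np_def Nq_def pq by simp_all
    show "(norm (w0 - z))\<^sup>2 * r\<^sup>2 + (h0 - \<tau> - 1/2 * Im (hinner w0 z))\<^sup>2 = r^4"
      "(norm (w1 - z))\<^sup>2 * r\<^sup>2 + (h1 - \<tau> - 1/2 * Im (hinner w1 z))\<^sup>2 = r^4"
      using y0(1) y1(1) hgauge_quartic unfolding pq hdist_pair by (metis fst_conv snd_conv)+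
    show "(norm z)\<^sup>2 * Np\<^sup>2 + \<tau>\<^sup>2 = Np^4" "(norm w)\<^sup>2 * Nq\<^sup>2 + \<sigma>\<^sup>2 = Nq^4"
      unfolding Np_def Nq_def using hgauge_quartic by (metis fst_conv snd_conv)+
    show "norm w0 \<le> 2 * t" "\<bar>h0\<bar> \<le> (2 * t)\<^sup>2"
      using hgauge_le_D[of "(w0, h0)" "2 * t"] y0(2) t unfolding hdist_hzero_left by simp_all
    show "norm (w - w1) \<le> 2 * t" "\<bar>\<sigma> - h1 - 1/2 * Im (hinner w w1)\<bar> \<le> (2 * t)\<^sup>2"
      using hgauge_le_D[of "(w - w1, \<sigma> - h1 - 1/2 * Im (hinner w w1))" "2 * t"] y1(2) t
      unfolding pq hdist_pair by simp_all
    show "99/100 \<le> \<bar>(1/Np)\<^sup>2 * \<tau>\<bar>" using vertical unfolding pq htau_pair Np_def .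
    show "norm ((1/Np) *\<^sub>R z - (1/Nq) *\<^sub>R w) \<le> 1/100"
      "\<bar>(1/Np)\<^sup>2 * \<tau> - (1/Nq)\<^sup>2 * \<sigma> - 1/2 * Im (hinner ((1/Np) *\<^sub>R z) ((1/Nq) *\<^sub>R w))\<bar> \<le> 1/10000"
      using hgauge_le_D[OF close[unfolded pq hhat_pair hdist_pair, folded Np_def Nq_def]]
      by (simp_all add: power_divide)
    show "aligned (z $ i) (w $ i)" for i
      using aligned_if_hphi2_lt N angles[of i] unfolding Np_def Nq_def pq by blast
    show "cmod (z $ i) / Np < 10 * T / r \<or> 10 * T / r' \<le> cmod (w $ i) / Nq" for i
      using dichotomy N unfolding pq Np_def Nq_def by (simp add: hrho_pair)
  qed (use N t r' in simp_all)
  show False by (rule inconsistent)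
qed

theorem lemma13:
  shows "\<exists>\<tau>b \<rho>b Rb \<phi>b \<epsilon>b. 1/2 < \<tau>b \<and> \<tau>b < 1 \<and> \<rho>b > 0 \<and> Rb > 0 \<and> \<phi>b > 0 \<and> \<epsilon>b > 0 \<and>
    (\<forall>(p :: 'n::finite heis) q t t' R T \<epsilon> r r'.
      p \<noteq> hzero \<longrightarrow> q \<noteq> hzero \<longrightarrow> t \<ge> 1 \<longrightarrow> t' \<ge> 1 \<longrightarrow> R > 1 \<longrightarrow> T \<ge> t * t' \<longrightarrow>
      0 < \<epsilon> \<longrightarrow> \<epsilon> < 1 \<longrightarrow> r \<ge> r' \<longrightarrow> r' \<ge> T * R \<longrightarrow> r' \<le> \<epsilon> * r \<longrightarrow>
      q \<in> hshell t r p \<longrightarrow> hzero \<in> hshell t r p \<inter> hshell t' r' q \<longrightarrow>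
      R > Rb \<longrightarrow> \<epsilon> < \<epsilon>b \<longrightarrow> \<bar>htau p\<bar> \<ge> \<tau>b \<longrightarrow> (\<forall>i. hphi2 p q i < \<phi>b) \<longrightarrow>
      (\<exists>i. i \<notin> {j. hrho p j < 10 * T / r} \<and> hrho q i < 10 * T / r') \<or>
      hdist (hhat p) (hhat q) > \<rho>b)"
proof -
  have phi: "0 < arccos (995/1000)" using arccos_less_arccos[of "995/1000" 1] by simp
  have main: "(\<exists>i. i \<notin> {j. hrho p j < 10 * T / r} \<and> hrho q i < 10 * T / r') \<or>
      hdist (hhat p) (hhat q) > 1/100"
    if "p \<noteq> hzero" "q \<noteq> hzero" "t \<ge> 1" "t' \<ge> 1" "T \<ge> t * t'" "r \<ge> r'" "r' \<ge> T * R"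
      "r' \<le> \<epsilon> * r" "\<epsilon> < 1/100" "R > 1000 * (real CARD('n) + 1)" "q \<in> hshell t r p"
      "hzero \<in> hshell t r p \<inter> hshell t' r' q" "\<bar>htau p\<bar> \<ge> 99/100"
      "\<forall>i. hphi2 p q i < arccos (995/1000)"
    for p q :: "'n heis" and t t' R T \<epsilon> r r'
    using lemma13_explicit[OF that(1-11)] that(12-14) by blast
  show ?thesis
    by (rule exI[of _ "99/100"], rule exI[of _ "1/100"], rule exI[of _ "1000 * (real CARD('n) + 1)"],
        rule exI[of _ "arccos (995/1000)"], rule exI[of _ "1/100"], intro conjI allI impI)
      (rule main; assumption | rule phi | simp)+
qed

end
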